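(* Let $a\ge b\ge 2$ be integers and $A=\begin{pmatrix}0&a&-2\\-a&0&b\\2&-b&0\end{pmatrix}$. Then $A$ is mutation-cyclic if and only if $a=b$.
   Context: Matrix mutation: $\mu_k(B)=(b'_{ij})$ with $b'_{ij}=-b_{ij}$ if $i=k$ or $j=k$, $b'_{ij}=b_{ij}+\operatorname{sgn}(b_{ik})\max(b_{ik}b_{kj},0)$ otherwise. A $3\times3$ skew-symmetric matrix is cyclic if its quiver ($b_{ij}$ arrows $i\to j$ when $b_{ij}>0$) contains an oriented cycle; it is mutation-cyclic if every matrix obtained from it by a finite sequence of mutations is cyclic. *)

theory Defs
  imports Main
begin

(* 3x3 integer matrices represented as functions on indices; only the entries
   with indices in {0,1,2} are relevant (vertices of the quiver are 0,1,2). *)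
type_synonym mat3 = "nat \<Rightarrow> nat \<Rightarrow> int"

definition idx3 :: "nat set" where "idx3 = {0, 1, 2}"

definition mutate :: "nat \<Rightarrow> mat3 \<Rightarrow> mat3" where
  "mutate k B = (\<lambda>i j. if i = k \<or> j = k then - B i j
                        else B i j + sgn (B i k) * max (B i k * B k j) 0)"

definition arrows3 :: "mat3 \<Rightarrow> (nat \<times> nat) set" where
  "arrows3 B = {(i, j). i \<in> idx3 \<and> j \<in> idx3 \<and> B i j > 0}"

definition cyclic3 :: "mat3 \<Rightarrow> bool" where
  "cyclic3 B \<longleftrightarrow> (\<exists>i. (i, i) \<in> (arrows3 B)\<^sup>+)"

definition mutation_class3 :: "mat3 \<Rightarrow> mat3 set" where
  "mutation_class3 B = {foldr mutate ks B | ks. set ks \<subseteq> idx3}"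

definition mutation_cyclic3 :: "mat3 \<Rightarrow> bool" where
  "mutation_cyclic3 B \<longleftrightarrow> (\<forall>B' \<in> mutation_class3 B. cyclic3 B')"

definition matA :: "int \<Rightarrow> int \<Rightarrow> mat3" where
  "matA a b = (\<lambda>i j.
     if i = 0 \<and> j = 1 then a else if i = 0 \<and> j = 2 then -2
     else if i = 1 \<and> j = 0 then -a else if i = 1 \<and> j = 2 then b
     else if i = 2 \<and> j = 0 then 2 else if i = 2 \<and> j = 1 then -b
     else 0)"

end

theory Submission imports Defs begin

text \<open>A skew-symmetric 3x3 matrix whose quiver is the triangle x \<rightarrow> y \<rightarrow> z \<rightarrow> x with weights
  p, q, r is mutated at y into the triangle x \<rightarrow> z \<rightarrow> y \<rightarrow> x with weights pq - r, q, p; this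
  preserves the Markov constant C(p,q,r) = p^2 + q^2 + r^2 - pqr. If C = 4 and all weights
  are at least 2, the new weight pq - r is again at least 2, so every matrix in the mutation
  class is a cyclic triangle; C(a,a,2) = 4. If C > 4, mutating at the vertex opposite the largest
  weight strictly decreases the sum of the weights as long as all weights are at least 2, so
  eventually a weight drops to at most 1, and then at most one more mutation gives an acyclic
  quiver; C(a,b,2) = (a-b)^2 + 4.\<close>

definition markov_const :: "int \<Rightarrow> int \<Rightarrow> int \<Rightarrow> int" where
  "markov_const p q r = p*p + q*q + r*r - p*q*r"

lemma markov_const_rotate: "markov_const q r p = markov_const p q r"
  unfolding markov_const_def by (simp add: algebra_simps)

lemma markov_const_mutate: "markov_const (p*q - r) q p = markov_const p q r"
  unfolding markov_const_def by (simp add: algebra_simps)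

lemma markov_const_matA: "markov_const a b 2 = (a - b)^2 + 4"
  unfolding markov_const_def by (simp add: algebra_simps power2_eq_square)

lemma markov_const_eq_4_mutate_ge_2:
  fixes p q r :: int
  assumes "2 \<le> p" "2 \<le> q" "2 \<le> r" "markov_const p q r = 4"
  shows "p*q - r \<ge> 2"
proof -
  have eq: "r * (p*q - r) = p*p + q*q - 4"
    using assms(4) unfolding markov_const_def by (simp add: algebra_simps)
  have "p*p \<ge> 4" "q*q \<ge> 4" "p*q \<ge> 4"
    using mult_mono[OF assms(1) assms(1)] mult_mono[OF assms(2) assms(2)]
      mult_mono[OF assms(1) assms(2)] assms by simp_all
  then have "r * (p*q - r) > 0" using eq by linarith
  then have pos: "p*q - r > 0" using assms(3) by (simp add: zero_less_mult_iff)
  show ?thesis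
  proof (rule ccontr)
    assume "\<not> ?thesis"
    then have "p*q - r = 1" using pos by linarith
    then have "p*p + q*q - p*q = 3" using eq by auto
    moreover have "(p-q)*(p-q) \<ge> 0" by simp
    ultimately show False using \<open>p*q \<ge> 4\<close> by (simp add: algebra_simps)
  qed
qed

lemma markov_const_le_4_ordered:
  fixes p q r :: int
  assumes "2 \<le> p" "p \<le> q" "q \<le> r" "2*r \<le> p*q"
  shows "markov_const p q r \<le> 4"
proof -
  have "(r-q)*(2*r - p*q) \<le> 0" using assms by (intro mult_nonneg_nonpos) auto
  moreover have "q*r*(p-2) \<ge> q*q*(p-2)" using assms by (intro mult_right_mono mult_left_mono) auto
  moreover have "q*q*(p-2) \<ge> p*p*(p-2)" using assms by (intro mult_right_mono mult_mono) auto
  moreover have "p*p*(3-p) \<le> 4"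
  proof (cases "p = 2")
    case False
    then have "3 - p \<le> 0" using assms by simp
    then show ?thesis by (smt (verit) mult_nonneg_nonpos zero_le_square)
  qed simp
  ultimately have "2 * markov_const p q r \<le> 8" unfolding markov_const_def by (simp add: algebra_simps)
  then show ?thesis by simp
qed

lemma markov_const_gt_4_mutate_less_max:
  fixes p q r :: int
  assumes "2 \<le> p" "2 \<le> q" "p \<le> r" "q \<le> r" "markov_const p q r > 4"
  shows "p*q - r < r"
proof (rule ccontr)
  assume "\<not> ?thesis"
  then have "2*r \<le> p*q" by simp
  then have "markov_const p q r \<le> 4"
  proof (cases "p \<le> q")
    case False
    then have "markov_const q p r \<le> 4"
      using markov_const_le_4_ordered[of q p r] assms \<open>2*r \<le> p*q\<close> by (simp add: mult.commute)
    then show ?thesis unfolding markov_const_def by (simp add: algebra_simps)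
  qed (use markov_const_le_4_ordered assms in auto)
  then show False using assms(5) by simp
qed

lemma mutation_cyclic3_imp_cyclic3:
  assumes "mutation_cyclic3 B"
  shows "cyclic3 B"
proof -
  have "foldr mutate [] B \<in> mutation_class3 B"
    unfolding mutation_class3_def by (intro CollectI exI[of _ "[]"]) simp
  then show ?thesis using assms unfolding mutation_cyclic3_def by simp
qed

lemma mutation_cyclic3_mutate:
  assumes "mutation_cyclic3 B" "k \<in> idx3"
  shows "mutation_cyclic3 (mutate k B)"
  unfolding mutation_cyclic3_def mutation_class3_def
proof safe
  fix ks assume "set ks \<subseteq> idx3"
  then have "foldr mutate ks (mutate k B) \<in> mutation_class3 B"
    using assms(2) unfolding mutation_class3_def by (intro CollectI exI[of _ "ks @ [k]"]) auto
  then show "cyclic3 (foldr mutate ks (mutate k B))"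
    using assms(1) unfolding mutation_cyclic3_def by blast
qed

lemma mutation_cyclic3_if_invariant:
  assumes "P B"
    and "\<And>B k. P B \<Longrightarrow> k \<in> idx3 \<Longrightarrow> P (mutate k B)"
    and "\<And>B. P B \<Longrightarrow> cyclic3 B"
  shows "mutation_cyclic3 B"
proof -
  have "P (foldr mutate ks B)" if "set ks \<subseteq> idx3" for ks
    using that by (induction ks) (simp_all add: assms(1,2))
  then show ?thesis
    unfolding mutation_cyclic3_def mutation_class3_def using assms(3) by auto
qed

definition triangle :: "nat \<Rightarrow> nat \<Rightarrow> nat \<Rightarrow> int \<Rightarrow> int \<Rightarrow> int \<Rightarrow> mat3" where
  "triangle x y z p q r = (\<lambda>i j.
     if i = x \<and> j = y then p else if i = y \<and> j = x then -p
     else if i = y \<and> j = z then q else if i = z \<and> j = y then -q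
     else if i = z \<and> j = x then r else if i = x \<and> j = z then -r else 0)"

definition vertex_cycle :: "nat \<Rightarrow> nat \<Rightarrow> nat \<Rightarrow> bool" where
  "vertex_cycle x y z \<longleftrightarrow> distinct [x, y, z] \<and> x \<in> idx3 \<and> y \<in> idx3 \<and> z \<in> idx3"

lemma vertex_cycle_rotate: "vertex_cycle x y z \<Longrightarrow> vertex_cycle y z x"
  by (auto simp: vertex_cycle_def)

lemma vertex_cycle_swap: "vertex_cycle x y z \<Longrightarrow> vertex_cycle x z y"
  by (auto simp: vertex_cycle_def)

lemma vertex_cycle_idx3:
  "vertex_cycle x y z \<Longrightarrow> k \<in> idx3 \<longleftrightarrow> k = x \<or> k = y \<or> k = z"
  by (auto simp: vertex_cycle_def idx3_def)

lemma triangle_rotate: "vertex_cycle x y z \<Longrightarrow> triangle x y z p q r = triangle y z x q r p"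
  by (auto simp: vertex_cycle_def triangle_def fun_eq_iff)

lemma matA_eq_triangle: "matA a b = triangle 0 1 2 a b 2"
  by (auto simp: matA_def triangle_def fun_eq_iff)

lemma mutate_triangle:
  assumes "vertex_cycle x y z" "p > 0" "q > 0"
  shows "mutate y (triangle x y z p q r) = triangle x z y (p*q - r) q p"
  using assms
  by (auto simp: vertex_cycle_def triangle_def mutate_def fun_eq_iff sgn_if mult_less_0_iff)

lemma cyclic3_triangle:
  assumes "vertex_cycle x y z" "p > 0" "q > 0" "r > 0"
  shows "cyclic3 (triangle x y z p q r)"
proof -
  let ?E = "arrows3 (triangle x y z p q r)"
  have "(x, y) \<in> ?E" "(y, z) \<in> ?E" "(z, x) \<in> ?E"
    using assms by (auto simp: vertex_cycle_def triangle_def arrows3_def)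
  then have "(x, x) \<in> ?E\<^sup>+" by (meson trancl.simps)
  then show ?thesis unfolding cyclic3_def by blast
qed

lemma not_cyclic3_triangle:
  assumes "vertex_cycle x y z" "p > 0" "q > 0" "r \<le> 0"
  shows "\<not> cyclic3 (triangle x y z p q r)"
proof -
  define rank :: "nat \<Rightarrow> nat" where "rank i = (if i = x then 0 else if i = y then 1 else 2)" for i
  let ?less = "{(i, j). rank i < rank j}"
  have "arrows3 (triangle x y z p q r) \<subseteq> ?less"
    using assms by (auto simp: vertex_cycle_def triangle_def arrows3_def rank_def split: if_splits)
  then have "(arrows3 (triangle x y z p q r))\<^sup>+ \<subseteq> ?less\<^sup>+" by (meson subsetI trancl_mono)
  also have "?less\<^sup>+ = ?less" by (rule trancl_id) (auto simp: trans_def)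
  finally show ?thesis unfolding cyclic3_def by auto
qed

lemma not_mutation_cyclic3_triangle_weight_le_1:
  assumes "vertex_cycle x y z" "p > 0" "q > 0" "r \<le> 1"
  shows "\<not> mutation_cyclic3 (triangle x y z p q r)"
proof
  assume mc: "mutation_cyclic3 (triangle x y z p q r)"
  have yzx: "vertex_cycle y z x" and zxy: "vertex_cycle z x y"
    using assms(1) by (auto simp: vertex_cycle_def)
  have "z \<in> idx3" "x \<in> idx3" using assms(1) by (auto simp: vertex_cycle_def)
  consider "r \<le> 0" | "r = 1" "q \<le> p" | "r = 1" "p < q" using assms(4) by linarith
  then show False
  proof cases
    case 1
    then show False using mc mutation_cyclic3_imp_cyclic3 not_cyclic3_triangle assms by blast
  next
    case 2
    have "mutate z (triangle x y z p q r) = triangle y x z (q - p) 1 q"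
      using mutate_triangle[OF yzx, of q 1 p] triangle_rotate[OF assms(1)] assms 2 by simp
    also have "\<dots> = triangle x z y 1 q (q - p)"
      using triangle_rotate assms(1) by (auto simp: vertex_cycle_def)
    finally show False
      using mutation_cyclic3_mutate[OF mc \<open>z \<in> idx3\<close>] mutation_cyclic3_imp_cyclic3
        not_cyclic3_triangle[OF vertex_cycle_swap[OF assms(1)], of 1 q "q - p"] assms 2 by auto
  next
    case 3
    have "mutate x (triangle x y z p q r) = triangle z y x (p - q) p 1"
      using mutate_triangle[OF zxy, of 1 p q] triangle_rotate[OF zxy] triangle_rotate[OF yzx] assms 3
      by simp
    also have "\<dots> = triangle y x z p 1 (p - q)"
      using triangle_rotate assms(1) by (auto simp: vertex_cycle_def)
    finally show False
      using mutation_cyclic3_mutate[OF mc \<open>x \<in> idx3\<close>] mutation_cyclic3_imp_cyclic3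
        not_cyclic3_triangle[of y x z p 1 "p - q"] assms 3 by (auto simp: vertex_cycle_def)
  qed
qed

lemma not_mutation_cyclic3_triangle_markov_gt_4:
  assumes "vertex_cycle x y z" "2 \<le> p" "2 \<le> q" "2 \<le> r" "markov_const p q r > 4"
  shows "\<not> mutation_cyclic3 (triangle x y z p q r)"
  using assms
proof (induction "nat (p + q + r)" arbitrary: x y z p q r rule: less_induct)
  case less
  have max_last: "\<not> mutation_cyclic3 (triangle x' y' z' p' q' r')"
    if "vertex_cycle x' y' z'" "2 \<le> p'" "2 \<le> q'" "p' \<le> r'" "q' \<le> r'"
      "markov_const p' q' r' = markov_const p q r" "p' + q' + r' = p + q + r"
    for x' y' z' p' q' r'
  proof
    assume mc: "mutation_cyclic3 (triangle x' y' z' p' q' r')"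
    let ?s = "p'*q' - r'"
    have "y' \<in> idx3" using that(1) by (simp add: vertex_cycle_def)
    have xzy: "vertex_cycle x' z' y'" using vertex_cycle_swap that(1) .
    have mutated: "mutation_cyclic3 (triangle z' y' x' q' p' ?s)"
      using mutation_cyclic3_mutate[OF mc \<open>y' \<in> idx3\<close>] mutate_triangle[OF that(1)]
        triangle_rotate[OF xzy] that(2,3) by simp
    show False
    proof (cases "?s \<le> 1")
      case True
      then show False
        using mutated not_mutation_cyclic3_triangle_weight_le_1[OF vertex_cycle_rotate[OF xzy]]
          that(2,3) by simp
    next
      case False
      have "?s < r'" using markov_const_gt_4_mutate_less_max that less.prems(5) by simp
      then have "\<not> mutation_cyclic3 (triangle x' z' y' ?s q' p')"
        using less.hyps[OF _ xzy] False that less.prems(5) markov_const_mutate[of p' q' r'] by simp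
      then show False using mutated triangle_rotate[OF xzy] by simp
    qed
  qed
  have cyc: "vertex_cycle y z x" "vertex_cycle z x y"
    using vertex_cycle_rotate less.prems(1) by blast+
  have rot: "triangle x y z p q r = triangle y z x q r p" "triangle x y z p q r = triangle z x y r p q"
    using triangle_rotate[OF less.prems(1)] triangle_rotate[OF cyc(1)] by simp_all
  have C: "markov_const q r p = markov_const p q r" "markov_const r p q = markov_const p q r"
    using markov_const_rotate[of p q r] markov_const_rotate[of q r p] by simp_all
  consider "p \<le> r" "q \<le> r" | "q \<le> p" "r \<le> p" | "r \<le> q" "p \<le> q" by linarith
  then show ?case
  proof cases
    case 1
    then show ?thesis using max_last[OF less.prems(1)] less.prems by simp
  next
    case 2
    then show ?thesis using max_last[OF cyc(1), of q r p] rot(1) C(1) less.prems by simp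
  next
    case 3
    then show ?thesis using max_last[OF cyc(2), of r p q] rot(2) C(2) less.prems by simp
  qed
qed

definition markov_triangle :: "mat3 \<Rightarrow> bool" where
  "markov_triangle B \<longleftrightarrow> (\<exists>x y z p q r. vertex_cycle x y z \<and> 2 \<le> p \<and> 2 \<le> q \<and> 2 \<le> r
     \<and> markov_const p q r = 4 \<and> B = triangle x y z p q r)"

lemma markov_triangle_mutate_middle:
  assumes "vertex_cycle x y z" "2 \<le> p" "2 \<le> q" "2 \<le> r" "markov_const p q r = 4"
  shows "markov_triangle (mutate y (triangle x y z p q r))"
proof -
  have "mutate y (triangle x y z p q r) = triangle x z y (p*q - r) q p"
    using mutate_triangle assms by simp
  moreover have "2 \<le> p*q - r" using markov_const_eq_4_mutate_ge_2 assms by blast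
  moreover have "markov_const (p*q - r) q p = 4" using markov_const_mutate assms(5) by simp
  ultimately show ?thesis
    unfolding markov_triangle_def using vertex_cycle_swap[OF assms(1)] assms by blast
qed

lemma markov_triangle_mutate:
  assumes "markov_triangle B" "k \<in> idx3"
  shows "markov_triangle (mutate k B)"
proof -
  obtain x y z p q r where cyc: "vertex_cycle x y z" and w: "2 \<le> p" "2 \<le> q" "2 \<le> r"
    and C: "markov_const p q r = 4" and B: "B = triangle x y z p q r"
    using assms(1) unfolding markov_triangle_def by blast
  have cyc': "vertex_cycle y z x" "vertex_cycle z x y"
    using vertex_cycle_rotate cyc by blast+
  have rot: "B = triangle y z x q r p" "B = triangle z x y r p q"
    using B triangle_rotate[OF cyc] triangle_rotate[OF cyc'(1)] by simp_all
  have C': "markov_const q r p = 4" "markov_const r p q = 4"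
    using C markov_const_rotate[of p q r] markov_const_rotate[of q r p] by simp_all
  consider "k = y" | "k = z" | "k = x" using vertex_cycle_idx3[OF cyc] assms(2) by blast
  then show ?thesis
  proof cases
    case 1
    then show ?thesis using markov_triangle_mutate_middle[OF cyc w C] B by simp
  next
    case 2
    then show ?thesis using markov_triangle_mutate_middle[OF cyc'(1) w(2,3,1) C'(1)] rot(1) by simp
  next
    case 3
    then show ?thesis using markov_triangle_mutate_middle[OF cyc'(2) w(3,1,2) C'(2)] rot(2) by simp
  qed
qed

lemma markov_triangle_cyclic3: "markov_triangle B \<Longrightarrow> cyclic3 B"
  unfolding markov_triangle_def using cyclic3_triangle by fastforce

theorem mainTheorem14:
  fixes a b :: int
  assumes "a \<ge> b" and "b \<ge> 2"
  shows "mutation_cyclic3 (matA a b) \<longleftrightarrow> a = b"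
proof
  have cyc: "vertex_cycle 0 1 2" by (simp add: vertex_cycle_def idx3_def)
  show "a = b" if "mutation_cyclic3 (matA a b)"
  proof (rule ccontr)
    assume "a \<noteq> b"
    then have "markov_const a b 2 > 4" by (simp add: markov_const_matA)
    then show False
      using not_mutation_cyclic3_triangle_markov_gt_4[OF cyc] assms that
      unfolding matA_eq_triangle by simp
  qed
  show "mutation_cyclic3 (matA a b)" if "a = b"
  proof (rule mutation_cyclic3_if_invariant[of markov_triangle])
    show "markov_triangle (matA a b)"
    proof -
      have "markov_const b b 2 = 4" by (simp add: markov_const_matA)
      then show ?thesis
        unfolding markov_triangle_def matA_eq_triangle \<open>a = b\<close>
        using cyc \<open>b \<ge> 2\<close> order_refl[of "2::int"] by blast
    qed
  qed (simp_all add: markov_triangle_mutate markov_triangle_cyclic3)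
qed

end
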